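(* The class of data languages accepted by SAFA is closed under union: for any SAFA $M_1$ and $M_2$ over the same $\Sigma\times D$, there is a SAFA $M_3$ with $L(M_3)=L(M_1)\cup L(M_2)$.
   Context: $D$ is a fixed countably infinite set of data values; for a finite alphabet $\Sigma$, data words are elements of $(\Sigma\times D)^*$. A set augmented finite automaton (SAFA) is a tuple $M=(Q,\Sigma\times D,q_0,F,H,\delta)$: $Q$ finite set of states, $q_0\in Q$ initial, $F\subseteq Q$ final, $H=\{h_1,\dots,h_m\}$ a finite collection of (names of) sets of data values, $\delta\subseteq Q\times\Sigma\times C\times OP\times Q$ with $C=\{p(h_i),\,!p(h_i): h_i\in H\}$, $OP=\{-\}\cup\{\mathsf{ins}(h_i):h_i\in H\}$. Configurations are $(q,\langle S_1,\dots,S_m\rangle)$ with $S_i\subseteq D$ finite; initially state $q_0$ and all sets empty. On reading $(a,d)$, a transition $(q,a,\alpha,op,q')$ from the current state may be taken if $\alpha=p(h_i)$ and $d\in S_i$, or $\alpha=\,!p(h_i)$ and $d\notin S_i$; then the state becomes $q'$ and if $op=\mathsf{ins}(h_j)$ the value $d$ is added to $S_j$ ($op=-$ changes nothing). A word is accepted if some run reads it entirely and ends in $F$; $L(M)$ is the set of accepted words. *)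

theory Defs
  imports Main "HOL-Library.Countable_Set"
begin

text \<open>States and names of the sets h_i are
  represented by natural numbers; the data domain is a type 'd (countably infinite
  in the theorem); the finite alphabet Sig is a finite set of letters of type 'a.\<close>

datatype cond = P nat | NP nat
datatype oper = Nop | Ins nat

record 'a safa =
  states :: "nat set"
  init   :: nat
  final  :: "nat set"
  hnames :: "nat set"
  trans  :: "(nat \<times> 'a \<times> cond \<times> oper \<times> nat) set"

fun cond_name :: "cond \<Rightarrow> nat" where
  "cond_name (P i) = i" | "cond_name (NP i) = i"

fun oper_ok :: "nat set \<Rightarrow> oper \<Rightarrow> bool" where
  "oper_ok H Nop = True" | "oper_ok H (Ins i) = (i \<in> H)"

definition is_safa :: "'a set \<Rightarrow> 'a safa \<Rightarrow> bool" where
  "is_safa Sig M \<longleftrightarrow>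
     finite (states M) \<and> init M \<in> states M \<and> final M \<subseteq> states M \<and>
     finite (hnames M) \<and>
     (\<forall>(q, a, c, op, q') \<in> trans M.
        q \<in> states M \<and> a \<in> Sig \<and> cond_name c \<in> hnames M \<and> oper_ok (hnames M) op
        \<and> q' \<in> states M)"

fun sat :: "cond \<Rightarrow> 'd \<Rightarrow> (nat \<Rightarrow> 'd set) \<Rightarrow> bool" where
  "sat (P i) d S = (d \<in> S i)"
| "sat (NP i) d S = (d \<notin> S i)"

fun apply_op :: "oper \<Rightarrow> 'd \<Rightarrow> (nat \<Rightarrow> 'd set) \<Rightarrow> (nat \<Rightarrow> 'd set)" where
  "apply_op Nop d S = S"
| "apply_op (Ins j) d S = S(j := insert d (S j))"

inductive accepts_from :: "'a safa \<Rightarrow> nat \<Rightarrow> (nat \<Rightarrow> 'd set) \<Rightarrow> ('a \<times> 'd) list \<Rightarrow> bool"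
  for M where
  acc_nil: "q \<in> final M \<Longrightarrow> accepts_from M q S []"
| acc_step: "(q, a, c, op, q') \<in> trans M \<Longrightarrow> sat c d S \<Longrightarrow>
     accepts_from M q' (apply_op op d S) w \<Longrightarrow> accepts_from M q S ((a, d) # w)"

definition lang :: "'a safa \<Rightarrow> ('a \<times> 'd) list set" where
  "lang M = {w. accepts_from M (init M) (\<lambda>_. {}) w}"

end

theory Submission
  imports Defs
begin

text \<open>The union automaton is the disjoint union of M1 and M2, with states renumbered to odd
  and even numbers, plus a fresh initial state 0 that carries a copy of every transition
  leaving the initial state of M1 or of M2 and is final iff one of those is. After its first
  step a run never leaves the copy it entered, so the names of the sets need not be made
  disjoint.\<close>

lemma accepts_from_Nil_iff: "accepts_from M q S [] \<longleftrightarrow> q \<in> final M"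
  by (auto elim: accepts_from.cases intro: accepts_from.intros)

lemma accepts_from_Cons_iff:
  "accepts_from M q S ((a, d) # w) \<longleftrightarrow>
     (\<exists>c op q'. (q, a, c, op, q') \<in> trans M \<and> sat c d S \<and> accepts_from M q' (apply_op op d S) w)"
  by (blast elim: accepts_from.cases intro: accepts_from.acc_step)

lemma accepts_from_embedding:
  assumes trans_iff: "\<And>q a c op r. (f q, a, c, op, r) \<in> trans N \<longleftrightarrow>
                          (\<exists>q'. r = f q' \<and> (q, a, c, op, q') \<in> trans M)"
    and final_iff: "\<And>q. f q \<in> final N \<longleftrightarrow> q \<in> final M"
  shows "accepts_from N (f q) S w \<longleftrightarrow> accepts_from M q S w"
proof (induction w arbitrary: q S)
  case Nil
  show ?case by (simp add: accepts_from_Nil_iff final_iff)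
next
  case (Cons x w)
  obtain a d where "x = (a, d)" by fastforce
  have "(\<exists>c op r. (f q, a, c, op, r) \<in> trans N \<and> sat c d S \<and>
           accepts_from N r (apply_op op d S) w) \<longleftrightarrow>
        (\<exists>c op q'. (q, a, c, op, q') \<in> trans M \<and> sat c d S \<and>
           accepts_from M q' (apply_op op d S) w)"
    unfolding trans_iff using Cons.IH by blast
  then show ?case using \<open>x = (a, d)\<close> by (simp only: accepts_from_Cons_iff)
qed

definition left_state :: "nat \<Rightarrow> nat" where "left_state q = 2 * q + 1"
definition right_state :: "nat \<Rightarrow> nat" where "right_state q = 2 * q + 2"

lemma left_state_inject [simp]: "left_state p = left_state q \<longleftrightarrow> p = q"
  and right_state_inject [simp]: "right_state p = right_state q \<longleftrightarrow> p = q"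
  and left_right_state_distinct [simp]: "left_state p \<noteq> right_state q" "right_state q \<noteq> left_state p"
  and left_state_nonzero [simp]: "left_state p \<noteq> 0" "0 \<noteq> left_state p"
  and right_state_nonzero [simp]: "right_state p \<noteq> 0" "0 \<noteq> right_state p"
  by (simp_all add: left_state_def right_state_def) presburger+

definition safa_union :: "'a safa \<Rightarrow> 'a safa \<Rightarrow> 'a safa" where
  "safa_union M1 M2 =
     \<lparr> states = insert 0 (left_state ` states M1 \<union> right_state ` states M2),
       init = 0,
       final = left_state ` final M1 \<union> right_state ` final M2 \<union>
         (if init M1 \<in> final M1 \<or> init M2 \<in> final M2 then {0} else {}),
       hnames = hnames M1 \<union> hnames M2,
       trans = {(left_state q, a, c, op, left_state q') | q a c op q'. (q, a, c, op, q') \<in> trans M1}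
         \<union> {(right_state q, a, c, op, right_state q') | q a c op q'. (q, a, c, op, q') \<in> trans M2}
         \<union> {(0, a, c, op, left_state q') | a c op q'. (init M1, a, c, op, q') \<in> trans M1}
         \<union> {(0, a, c, op, right_state q') | a c op q'. (init M2, a, c, op, q') \<in> trans M2} \<rparr>"

lemma trans_safa_union:
  "(p, a, c, op, r) \<in> trans (safa_union M1 M2) \<longleftrightarrow>
     (\<exists>q q'. p = left_state q \<and> r = left_state q' \<and> (q, a, c, op, q') \<in> trans M1) \<or>
     (\<exists>q q'. p = right_state q \<and> r = right_state q' \<and> (q, a, c, op, q') \<in> trans M2) \<or>
     (\<exists>q'. p = 0 \<and> r = left_state q' \<and> (init M1, a, c, op, q') \<in> trans M1) \<or>
     (\<exists>q'. p = 0 \<and> r = right_state q' \<and> (init M2, a, c, op, q') \<in> trans M2)"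
  by (simp add: safa_union_def)

lemma oper_ok_mono: "oper_ok H op \<Longrightarrow> H \<subseteq> H' \<Longrightarrow> oper_ok H' op"
  by (cases op) auto

lemma is_safa_safa_union:
  assumes "is_safa Sig M1" and "is_safa Sig M2"
  shows "is_safa Sig (safa_union M1 M2)"
proof -
  have transitions_ok: "q \<in> states (safa_union M1 M2) \<and> a \<in> Sig \<and>
        cond_name c \<in> hnames (safa_union M1 M2) \<and> oper_ok (hnames (safa_union M1 M2)) op \<and>
        q' \<in> states (safa_union M1 M2)"
    if "(q, a, c, op, q') \<in> trans (safa_union M1 M2)" for q a c op q'
    using that assms unfolding trans_safa_union is_safa_def
    by (elim disjE exE conjE) (fastforce simp: safa_union_def intro: oper_ok_mono)+
  have "finite (states (safa_union M1 M2)) \<and> init (safa_union M1 M2) \<in> states (safa_union M1 M2) \<and>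
      final (safa_union M1 M2) \<subseteq> states (safa_union M1 M2) \<and> finite (hnames (safa_union M1 M2))"
    using assms unfolding is_safa_def safa_union_def by auto
  with transitions_ok show ?thesis
    unfolding is_safa_def by blast
qed

lemma accepts_from_safa_union_left:
  "accepts_from (safa_union M1 M2) (left_state q) S w \<longleftrightarrow> accepts_from M1 q S w"
  by (rule accepts_from_embedding) (auto simp: trans_safa_union safa_union_def)

lemma accepts_from_safa_union_right:
  "accepts_from (safa_union M1 M2) (right_state q) S w \<longleftrightarrow> accepts_from M2 q S w"
  by (rule accepts_from_embedding) (auto simp: trans_safa_union safa_union_def)

lemma accepts_from_safa_union_init:
  "accepts_from (safa_union M1 M2) 0 S w \<longleftrightarrow>
     accepts_from M1 (init M1) S w \<or> accepts_from M2 (init M2) S w"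
proof (cases w)
  case Nil
  then show ?thesis by (simp add: accepts_from_Nil_iff safa_union_def image_iff)
next
  case (Cons x w')
  obtain a d where "w = (a, d) # w'" using Cons by fastforce
  then show ?thesis
    by (auto simp: accepts_from_Cons_iff trans_safa_union
        accepts_from_safa_union_left accepts_from_safa_union_right)
      (metis accepts_from_safa_union_left accepts_from_safa_union_right)+
qed

theorem lemma5:
  fixes Sig :: "'a set" and M1 M2 :: "'a safa"
  assumes "finite Sig"
    and "infinite (UNIV :: 'd set)" and "countable (UNIV :: 'd set)"
    and "is_safa Sig M1" and "is_safa Sig M2"
  shows "\<exists>M3. is_safa Sig M3 \<and>
           (lang M3 :: ('a \<times> 'd) list set) = lang M1 \<union> lang M2"
proof (intro exI conjI)
  show "is_safa Sig (safa_union M1 M2)"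
    using assms(4,5) by (rule is_safa_safa_union)
  have "init (safa_union M1 M2) = 0"
    by (simp add: safa_union_def)
  then show "(lang (safa_union M1 M2) :: ('a \<times> 'd) list set) = lang M1 \<union> lang M2"
    unfolding lang_def by (auto simp: accepts_from_safa_union_init)
qed

end
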